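(* Let $F$ be an isotropic random field on $\mathcal S^N$ that is almost surely continuous, and let $\mathbf n=(\sqrt N,0,\dots,0)$. Suppose: (1) for every $c>0$ there is $c_1(c)>0$ such that for every $\delta>0$, $\mathbb P(|F(\mathbf n)-\mathbb E F(\mathbf n)|\ge cN^{1/2+\delta})\lesssim e^{-c_1N^{1+2\delta}}$; (2) there is $\alpha>0$ and for every $c>0$ a $c_2(c)>0$ such that for every $\delta>0$, $\mathbb P(\sup_{x,y:R(x,y)\ge1-N^{-\alpha}}|F(x)-F(y)|\ge cN^{1/2+\delta})\lesssim e^{-c_2N^{1+2\delta}}$. Then for every $c>0$ there is $f(c)>0$ (depending on $c_1,c_2$) such that for every $\delta>0$, $\mathbb P(\sup_{x\in\mathcal S^N}|F(x)-\mathbb E F(\mathbf n)|\ge cN^{1/2+\delta})\lesssim e^{-f(c)N^{1+2\delta}}$. Moreover, if $F\ge0$ almost surely, $\mathbb EF(\mathbf n)=O(\sqrt N)$, (1) holds, and (2) is replaced by (2'): there is $\alpha>0$ and for every $c>0$ a $c_2(c)>0$ such that for every $\delta>0$, $\mathbb P(\sup_{x,y:R(x,y)\ge1-N^{-\alpha}}|F^2(x)-F^2(y)|\ge cN^{1+2\delta})\lesssim e^{-c_2N^{1+2\delta}}$, then for every $c>0$ there is $f(c)>0$ such that for every $\delta>0$, $\mathbb P(\sup_{x\in\mathcal S^N}F(x)\ge cN^{1/2+\delta})\lesssim e^{-f(c)N^{1+2\delta}}$.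
   Context: $\mathcal S^N=\{x\in\mathbb R^N:\sum x_i^2=N\}$; $R(x,y)=\frac1N\sum_ix_iy_i$ is the normalized overlap. A random field on $\mathcal S^N$ is isotropic if its law is invariant under orthogonal transformations of $\mathbb R^N$. The symbol $\lesssim$ means inequality up to a constant independent of $N$. *)

theory Defs
  imports "HOL-Probability.Probability"
begin

text \<open>Vectors of R^N are represented as functions nat => real vanishing at indices >= N.\<close>

definition sphereN :: "nat \<Rightarrow> (nat \<Rightarrow> real) set" where
  "sphereN N = {x. (\<forall>i\<ge>N. x i = 0) \<and> (\<Sum>i<N. (x i)^2) = real N}"

definition overlap :: "nat \<Rightarrow> (nat \<Rightarrow> real) \<Rightarrow> (nat \<Rightarrow> real) \<Rightarrow> real" where
  "overlap N x y = (\<Sum>i<N. x i * y i) / real N"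

definition northpole :: "nat \<Rightarrow> (nat \<Rightarrow> real)" where
  "northpole N = (\<lambda>i. if i = 0 then sqrt (real N) else 0)"

definition orthogonal_matN :: "nat \<Rightarrow> (nat \<Rightarrow> nat \<Rightarrow> real) \<Rightarrow> bool" where
  "orthogonal_matN N U \<longleftrightarrow>
     (\<forall>i<N. \<forall>j<N. (\<Sum>k<N. U k i * U k j) = (if i = j then 1 else 0))"

definition matvecN :: "nat \<Rightarrow> (nat \<Rightarrow> nat \<Rightarrow> real) \<Rightarrow> (nat \<Rightarrow> real) \<Rightarrow> (nat \<Rightarrow> real)" where
  "matvecN N U x = (\<lambda>i. if i < N then (\<Sum>j<N. U i j * x j) else 0)"

definition isotropic_field :: "'w measure \<Rightarrow> nat \<Rightarrow> ('w \<Rightarrow> (nat \<Rightarrow> real) \<Rightarrow> real) \<Rightarrow> bool" where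
  "isotropic_field M N F \<longleftrightarrow>
     (\<forall>x\<in>sphereN N. (\<lambda>\<omega>. F \<omega> x) \<in> borel_measurable M) \<and>
     (\<forall>U (k::nat) (xs :: nat \<Rightarrow> nat \<Rightarrow> real). orthogonal_matN N U \<longrightarrow> (\<forall>i<k. xs i \<in> sphereN N) \<longrightarrow>
        distr M (Pi\<^sub>M {..<k} (\<lambda>_. (borel :: real measure))) (\<lambda>\<omega>. \<lambda>i\<in>{..<k}. F \<omega> (xs i))
      = distr M (Pi\<^sub>M {..<k} (\<lambda>_. (borel :: real measure))) (\<lambda>\<omega>. \<lambda>i\<in>{..<k}. F \<omega> (matvecN N U (xs i))))"

text \<open>Outer probability (events defined by suprema need not be measurable a priori).\<close>
definition outer_prob :: "'w measure \<Rightarrow> 'w set \<Rightarrow> real" where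
  "outer_prob M A = Inf {measure M B | B. B \<in> sets M \<and> A \<inter> space M \<subseteq> B}"

end

theory Submission
  imports Defs "HOL-Real_Asymp.Real_Asymp"
begin

text \<open>
  Rounding to a grid of mesh \<open>N^(-\<alpha>/2)\<close> and renormalising gives a net of the
  sphere of size \<open>exp (O (N log N))\<close> such that every point has overlap at least \<open>1 - N^(-\<alpha>)\<close>
  with some net point. If \<open>sup |F - E|\<close> is large, then either \<open>F\<close> deviates at a net point or it
  oscillates between two points of overlap \<open>\<ge> 1 - N^(-\<alpha>)\<close>. By isotropy every net point has the
  law of the north pole, so the union bound over the net costs only a factor \<open>exp (O (N log N))\<close>,
  which is negligible against \<open>exp (-c N^(1+2\<delta>))\<close>.
  For the one-sided bound on a nonnegative field with \<open>E F(n) = O(\<surd>N)\<close>, a large value at \<open>x\<close>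
  next to a moderate value at a net point forces a large oscillation of \<open>F\<^sup>2\<close> instead.
\<close>

section \<open>Outer probability\<close>

lemma outer_prob_le_measure:
  assumes "B \<in> sets M" "A \<inter> space M \<subseteq> B"
  shows "outer_prob M A \<le> measure M B"
  unfolding outer_prob_def
  by (rule cInf_lower) (use assms in \<open>auto intro!: bdd_belowI[where m=0]\<close>)

lemma outer_prob_nonneg: "0 \<le> outer_prob M A"
  unfolding outer_prob_def by (rule cInf_greatest) (auto intro!: exI[where x="space M"])

lemma (in prob_space) outer_prob_le_1: "outer_prob M A \<le> 1"
  using outer_prob_le_measure[of "space M" M A] prob_space by simp

lemma outer_prob_Un_le:
  assumes G: "G \<in> sets M" and A: "A \<inter> space M \<subseteq> G \<union> B"
  shows "outer_prob M A \<le> measure M G + outer_prob M B"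
proof -
  have "outer_prob M A - measure M G \<le> outer_prob M B"
    unfolding outer_prob_def[of M B]
  proof (rule cInf_greatest)
    fix m assume "m \<in> {measure M B' |B'. B' \<in> sets M \<and> B \<inter> space M \<subseteq> B'}"
    then obtain B' where B': "B' \<in> sets M" "B \<inter> space M \<subseteq> B'" "m = measure M B'" by auto
    have "outer_prob M A \<le> measure M (G \<union> B')"
      using G A B' by (intro outer_prob_le_measure) auto
    also have "\<dots> \<le> measure M G + measure M B'"
      using G B' by (intro measure_Un_le) auto
    finally show "outer_prob M A - measure M G \<le> m" using B' by simp
  qed (auto intro!: exI[where x="space M"])
  then show ?thesis by simp
qed

lemma outer_prob_le_AE:
  assumes "AE \<omega> in M. P \<omega>"
  shows "outer_prob M A \<le> outer_prob M {\<omega>\<in>A. P \<omega>}"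
proof -
  obtain Z where Z: "{\<omega>\<in>space M. \<not> P \<omega>} \<subseteq> Z" "Z \<in> sets M" "emeasure M Z = 0"
    using assms by (auto elim!: AE_E)
  have "outer_prob M A \<le> measure M Z + outer_prob M {\<omega>\<in>A. P \<omega>}"
    using Z by (intro outer_prob_Un_le) auto
  then show ?thesis using Z by (simp add: measure_def)
qed

lemma (in finite_measure) outer_prob_eq_measure:
  assumes A: "A \<in> sets M"
  shows "outer_prob M A = measure M A"
proof (rule antisym)
  show "outer_prob M A \<le> measure M A" using A by (intro outer_prob_le_measure) auto
  show "measure M A \<le> outer_prob M A"
    unfolding outer_prob_def
  proof (rule cInf_greatest)
    fix m assume "m \<in> {measure M B |B. B \<in> sets M \<and> A \<inter> space M \<subseteq> B}"
    then obtain B where B: "B \<in> sets M" "A \<inter> space M \<subseteq> B" "m = measure M B" by auto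
    have "A \<subseteq> B" using A B(2) sets.sets_into_space by blast
    then show "measure M A \<le> m" using B by (simp add: finite_measure_mono)
  qed (auto intro!: exI[where x="space M"])
qed

section \<open>Isotropy\<close>

lemma sum_northpole_mult:
  assumes "N \<ge> 1"
  shows "(\<Sum>j<N. northpole N j * g j) = sqrt (real N) * g 0"
proof -
  have "(\<Sum>j<N. northpole N j * g j) = (\<Sum>j<N. if j = 0 then sqrt (real N) * g 0 else 0)"
    by (intro sum.cong) (auto simp: northpole_def)
  also have "\<dots> = sqrt (real N) * g 0" using assms by (simp add: sum.delta)
  finally show ?thesis .
qed

lemma northpole_in_sphereN: "N \<ge> 1 \<Longrightarrow> northpole N \<in> sphereN N"
  using sum_northpole_mult[of N "northpole N"]
  by (auto simp: sphereN_def northpole_def power2_eq_square)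

lemma orthogonal_matN_householder:
  assumes s: "(\<Sum>k<N. (v k)^2) = s" "0 < s"
  shows "orthogonal_matN N (\<lambda>i j. of_bool (i = j) - 2 * v i * v j / s)"
  unfolding orthogonal_matN_def
proof (intro allI impI)
  fix i j assume ij: "i < N" "j < N"
  have delta: "(\<Sum>k<N. of_bool (k = i) * of_bool (k = j)) = (of_bool (i = j) :: real)"
    "\<And>a. (\<Sum>k<N. of_bool (k = i) * (a * v k)) = a * v i"
    "\<And>a. (\<Sum>k<N. of_bool (k = j) * (a * v k)) = a * v j"
    using ij by simp_all
  have "(\<Sum>k<N. (of_bool (k = i) - 2 * v k * v i / s) * (of_bool (k = j) - 2 * v k * v j / s))
      = (\<Sum>k<N. of_bool (k = i) * of_bool (k = j)) - (\<Sum>k<N. of_bool (k = i) * (2 * v j / s * v k))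
          - (\<Sum>k<N. of_bool (k = j) * (2 * v i / s * v k)) + 4 * v i * v j / s^2 * (\<Sum>k<N. (v k)^2)"
    by (simp add: sum.distrib sum_subtractf sum_distrib_left sum_divide_distrib algebra_simps power2_eq_square)
  also have "\<dots> = of_bool (i = j) - 2 * v j / s * v i - 2 * v i / s * v j + 4 * v i * v j / s^2 * s"
    by (simp only: delta s(1))
  also have "\<dots> = of_bool (i = j)"
    using s(2) by (simp add: power2_eq_square field_simps)
  finally show "(\<Sum>k<N. (of_bool (k = i) - 2 * v k * v i / s) * (of_bool (k = j) - 2 * v k * v j / s))
      = (if i = j then 1 else 0)"
    by simp
qed

lemma orthogonal_matN_maps_northpole:
  assumes N: "N \<ge> 1" and p: "p \<in> sphereN N"
  shows "\<exists>U. orthogonal_matN N U \<and> matvecN N U (northpole N) = p"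
proof (cases "p = northpole N")
  case True
  have "orthogonal_matN N (\<lambda>i j. of_bool (i = j))"
    by (simp add: orthogonal_matN_def flip: of_bool_def)
  moreover have "matvecN N (\<lambda>i j. of_bool (i = j)) (northpole N) = p"
    using p True by (auto simp: matvecN_def sphereN_def)
  ultimately show ?thesis by blast
next
  case False
  let ?n = "northpole N"
  \<comment> \<open>The reflection in the hyperplane orthogonal to \<open>v = n - p\<close> swaps \<open>n\<close> and \<open>p\<close>.\<close>
  define v where "v i = ?n i - p i" for i
  define s where "s = (\<Sum>k<N. (v k)^2)"
  have p0: "\<forall>i\<ge>N. p i = 0" and p2: "(\<Sum>i<N. (p i)^2) = real N"
    using p by (auto simp: sphereN_def)
  obtain i0 where i0: "p i0 \<noteq> ?n i0" using False by auto
  then have "i0 < N" using p0 N by (cases "i0 < N") (auto simp: northpole_def)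
  then have s_pos: "s > 0" unfolding s_def using i0
    by (intro sum_pos2[where i=i0]) (auto simp: v_def)
  have n2: "(\<Sum>i<N. (?n i)^2) = real N"
    using northpole_in_sphereN[OF N] by (simp add: sphereN_def)
  have s_eq: "s = 2 * (real N - sqrt (real N) * p 0)"
  proof -
    have "s = (\<Sum>k<N. (?n k)^2) + (\<Sum>k<N. (p k)^2) - 2 * (\<Sum>k<N. ?n k * p k)"
      unfolding s_def v_def
      by (simp add: power2_diff sum.distrib sum_subtractf sum_distrib_left mult.assoc)
    then show ?thesis using n2 p2 sum_northpole_mult[OF N, of p] by simp
  qed
  have vn: "(\<Sum>j<N. v j * ?n j) = s / 2"
    using sum_northpole_mult[OF N, of v] N s_eq
    by (simp add: mult.commute v_def northpole_def right_diff_distrib)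
  define U where "U i j = of_bool (i = j) - 2 * v i * v j / s" for i j
  have "orthogonal_matN N U"
    unfolding U_def using s_def s_pos by (intro orthogonal_matN_householder) auto
  moreover have "matvecN N U ?n = p"
  proof
    fix i
    show "matvecN N U ?n i = p i"
    proof (cases "i < N")
      case True
      have "(\<Sum>j<N. U i j * ?n j) = (\<Sum>j<N. of_bool (i = j) * ?n j) - 2 * v i / s * (\<Sum>j<N. v j * ?n j)"
        unfolding U_def by (simp add: algebra_simps sum_subtractf sum_distrib_left)
      also have "\<dots> = ?n i - v i"
        using True vn s_pos by (simp add: field_simps)
      finally show ?thesis using True by (simp add: matvecN_def v_def)
    qed (use p0 in \<open>simp add: matvecN_def\<close>)
  qed
  ultimately show ?thesis by blast
qed

lemma isotropic_field_event_measure_eq: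
  assumes iso: "isotropic_field M N F" and N: "N \<ge> 1" and p: "p \<in> sphereN N"
    and P: "Collect P \<in> sets borel"
  shows "measure M {\<omega>\<in>space M. P (F \<omega> p)} = measure M {\<omega>\<in>space M. P (F \<omega> (northpole N))}"
proof -
  obtain U where U: "orthogonal_matN N U" "matvecN N U (northpole N) = p"
    using orthogonal_matN_maps_northpole[OF N p] by blast
  let ?PM = "Pi\<^sub>M {..<1::nat} (\<lambda>_. borel :: real measure)"
  let ?X = "\<lambda>x \<omega>. \<lambda>i\<in>{..<1::nat}. F \<omega> x"
  have "distr M ?PM (?X (northpole N)) = distr M ?PM (?X p)"
    using iso northpole_in_sphereN[OF N] U unfolding isotropic_field_def
    by (auto dest!: spec[of _ U] spec[of _ 1] spec[of _ "\<lambda>_. northpole N"])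
  moreover
  define S where "S = (\<lambda>f. f 0) -` Collect P \<inter> space ?PM"
  have S: "S \<in> sets ?PM"
    unfolding S_def using P by (intro measurable_sets[OF measurable_component_singleton]) auto
  have "measure M {\<omega>\<in>space M. P (F \<omega> x)} = measure (distr M ?PM (?X x)) S" if "x \<in> sphereN N" for x
  proof -
    have "?X x \<in> measurable M ?PM"
      using iso that by (intro measurable_restrict) (auto simp: isotropic_field_def)
    moreover have "?X x -` S \<inter> space M = {\<omega>\<in>space M. P (F \<omega> x)}"
      unfolding S_def by (auto simp: space_PiM)
    ultimately show ?thesis using S by (simp add: measure_distr)
  qed
  ultimately show ?thesis using p northpole_in_sphereN[OF N] by simp
qed

section \<open>A net of the sphere\<close>

definition grid_round :: "nat \<Rightarrow> real \<Rightarrow> (nat \<Rightarrow> real) \<Rightarrow> (nat \<Rightarrow> real)" where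
  "grid_round N h x = (\<lambda>i. if i < N then h * of_int (round (x i / h)) else 0)"

definition sphere_normalize :: "nat \<Rightarrow> (nat \<Rightarrow> real) \<Rightarrow> (nat \<Rightarrow> real)" where
  "sphere_normalize N q = (\<lambda>i. sqrt (real N) / L2_set q {..<N} * q i)"

definition sphere_net :: "real \<Rightarrow> nat \<Rightarrow> (nat \<Rightarrow> real) set" where
  "sphere_net \<alpha> N = sphere_normalize N ` grid_round N (real N powr (-\<alpha>/2)) ` sphereN N"

lemma L2_set_sphereN: "x \<in> sphereN N \<Longrightarrow> L2_set x {..<N} = sqrt (real N)"
  by (simp add: L2_set_def sphereN_def)

lemma L2_set_scale: "L2_set (\<lambda>i. c * f i) A = \<bar>c\<bar> * L2_set f A"
  by (simp add: L2_set_def power_mult_distrib real_sqrt_mult flip: sum_distrib_left)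

lemma L2_set_minus_commute: "L2_set (\<lambda>i. f i - g i) A = L2_set (\<lambda>i. g i - f i) A"
  by (simp add: L2_set_def power2_commute)

lemma abs_grid_round_diff_le:
  assumes h: "h > 0" and i: "i < N"
  shows "\<bar>x i - grid_round N h x i\<bar> \<le> h / 2"
proof -
  have "x i - grid_round N h x i = h * (x i / h - of_int (round (x i / h)))"
    using h i by (simp add: grid_round_def field_simps)
  moreover have "\<bar>x i / h - of_int (round (x i / h))\<bar> \<le> 1/2"
    using of_int_round_abs_le[of "x i / h"] by (simp add: abs_minus_commute)
  ultimately show ?thesis using h by (simp add: abs_mult)
qed

lemma L2_set_grid_round_diff_le:
  assumes "h > 0"
  shows "L2_set (\<lambda>i. x i - grid_round N h x i) {..<N} \<le> sqrt (real N) * h / 2"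
proof -
  have "L2_set (\<lambda>i. x i - grid_round N h x i) {..<N} = L2_set (\<lambda>i. \<bar>x i - grid_round N h x i\<bar>) {..<N}"
    by (simp add: L2_set_def)
  also have "\<dots> \<le> L2_set (\<lambda>_. h / 2) {..<N}"
    using abs_grid_round_diff_le[OF assms] by (intro L2_set_mono) auto
  also have "\<dots> = sqrt (real N) * h / 2" using assms by (simp add: L2_set_constant)
  finally show ?thesis .
qed

lemma overlap_sphereN_eq:
  assumes "N \<ge> 1" "x \<in> sphereN N" "y \<in> sphereN N"
  shows "overlap N x y = 1 - (L2_set (\<lambda>i. x i - y i) {..<N})^2 / (2 * real N)"
proof -
  have "(L2_set (\<lambda>i. x i - y i) {..<N})^2 = (\<Sum>i<N. (x i - y i)^2)"
    by (simp add: L2_set_def sum_nonneg)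
  also have "\<dots> = (\<Sum>i<N. (x i)^2) + (\<Sum>i<N. (y i)^2) - 2 * (\<Sum>i<N. x i * y i)"
    by (simp add: power2_diff sum.distrib sum_subtractf sum_distrib_left mult.assoc)
  finally show ?thesis using assms by (simp add: sphereN_def overlap_def field_simps)
qed

text \<open>The radial correction \<open>|q| - \<surd>N\<close> is at most \<open>|x - q|\<close>, because \<open>|x| = \<surd>N\<close>.\<close>
lemma L2_set_diff_sphere_normalize_le:
  assumes x: "x \<in> sphereN N" and q: "L2_set q {..<N} > 0"
  shows "L2_set (\<lambda>i. x i - sphere_normalize N q i) {..<N} \<le> 2 * L2_set (\<lambda>i. x i - q i) {..<N}"
proof -
  let ?r = "sqrt (real N)" and ?l = "L2_set q {..<N}" and ?e = "L2_set (\<lambda>i. x i - q i) {..<N}"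
  have "?r \<le> ?l + ?e"
    using L2_set_triangle_ineq[of q "\<lambda>i. x i - q i" "{..<N}"] by (simp add: L2_set_sphereN[OF x])
  moreover have "?l \<le> ?r + ?e"
    using L2_set_triangle_ineq[of x "\<lambda>i. q i - x i" "{..<N}"] L2_set_minus_commute[of q x]
    by (simp add: L2_set_sphereN[OF x])
  moreover have "L2_set (\<lambda>i. (1 - ?r / ?l) * q i) {..<N} = \<bar>?l - ?r\<bar>"
  proof -
    have "L2_set (\<lambda>i. (1 - ?r / ?l) * q i) {..<N} = \<bar>(1 - ?r / ?l) * ?l\<bar>"
      using q by (simp only: L2_set_scale abs_mult abs_of_pos)
    also have "(1 - ?r / ?l) * ?l = ?l - ?r" using q by (simp add: field_simps)
    finally show ?thesis .
  qed
  ultimately have scale: "L2_set (\<lambda>i. (1 - ?r / ?l) * q i) {..<N} \<le> ?e" by linarith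
  have "L2_set (\<lambda>i. x i - sphere_normalize N q i) {..<N}
      = L2_set (\<lambda>i. (x i - q i) + (1 - ?r / ?l) * q i) {..<N}"
    by (simp add: sphere_normalize_def algebra_simps)
  also have "\<dots> \<le> ?e + L2_set (\<lambda>i. (1 - ?r / ?l) * q i) {..<N}"
    by (rule L2_set_triangle_ineq)
  finally show ?thesis using scale by linarith
qed

lemma sphere_normalize_in_sphereN:
  assumes "L2_set q {..<N} > 0" "\<forall>i\<ge>N. q i = 0"
  shows "sphere_normalize N q \<in> sphereN N"
proof -
  have "(\<Sum>i<N. (sphere_normalize N q i)^2) = real N / (L2_set q {..<N})^2 * (\<Sum>i<N. (q i)^2)"
    by (simp add: sphere_normalize_def power_mult_distrib power_divide sum_distrib_left)
  also have "\<dots> = real N"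
    using assms(1) by (simp add: L2_set_def sum_nonneg)
  finally show ?thesis using assms(2) by (simp add: sphereN_def sphere_normalize_def)
qed

lemma sphere_normalize_grid_round:
  assumes N: "N \<ge> 1" and h: "0 < h" "h \<le> 1" and x: "x \<in> sphereN N"
  defines "p \<equiv> sphere_normalize N (grid_round N h x)"
  shows "p \<in> sphereN N" "overlap N x p \<ge> 1 - h^2"
proof -
  let ?q = "grid_round N h x"
  have e: "L2_set (\<lambda>i. x i - ?q i) {..<N} \<le> sqrt (real N) * h / 2"
    using h(1) by (rule L2_set_grid_round_diff_le)
  have "sqrt (real N) \<le> L2_set ?q {..<N} + L2_set (\<lambda>i. x i - ?q i) {..<N}"
    using L2_set_triangle_ineq[of ?q "\<lambda>i. x i - ?q i" "{..<N}"] by (simp add: L2_set_sphereN[OF x])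
  moreover have "sqrt (real N) * h / 2 < sqrt (real N)" using N h by simp
  ultimately have q: "L2_set ?q {..<N} > 0" using e by linarith
  show p: "p \<in> sphereN N"
    unfolding p_def using q by (intro sphere_normalize_in_sphereN) (simp_all add: grid_round_def)
  have "L2_set (\<lambda>i. x i - p i) {..<N} \<le> sqrt (real N) * h"
    using L2_set_diff_sphere_normalize_le[OF x q] e unfolding p_def by linarith
  then have "(L2_set (\<lambda>i. x i - p i) {..<N})^2 \<le> (sqrt (real N) * h)^2"
    by (intro power_mono) auto
  also have "\<dots> = real N * h^2" by (simp add: power_mult_distrib)
  finally have "overlap N x p \<ge> 1 - real N * h^2 / (2 * real N)"
    unfolding overlap_sphereN_eq[OF N x p] by (intro diff_left_mono divide_right_mono) auto
  moreover have "real N * h^2 / (2 * real N) \<le> h^2" using N by simp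
  ultimately show "overlap N x p \<ge> 1 - h^2" by linarith
qed

lemma abs_sphereN_le: "x \<in> sphereN N \<Longrightarrow> \<bar>x i\<bar> \<le> sqrt (real N)"
proof (cases "i < N")
  case True
  assume x: "x \<in> sphereN N"
  have "(x i)^2 \<le> (\<Sum>j<N. (x j)^2)" using True by (intro member_le_sum) auto
  then show ?thesis using x by (simp add: sphereN_def real_le_rsqrt)
qed (simp add: sphereN_def)

lemma card_grid_round_sphereN:
  fixes N :: nat
  assumes h: "h > 0"
  defines "m \<equiv> \<lceil>sqrt (real N) / h\<rceil> + 1"
  shows "finite (grid_round N h ` sphereN N)" "card (grid_round N h ` sphereN N) \<le> nat (2*m+1) ^ N"
proof -
  define G where "G = (\<lambda>k i. if i < N then h * of_int (k i) else 0) ` PiE {..<N} (\<lambda>_. {-m..m})"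
  have sub: "grid_round N h ` sphereN N \<subseteq> G"
  proof
    fix y assume "y \<in> grid_round N h ` sphereN N"
    then obtain x where x: "x \<in> sphereN N" and y: "y = grid_round N h x" by auto
    have "\<bar>round (x i / h)\<bar> \<le> m" for i
    proof -
      have "\<bar>x i / h\<bar> \<le> sqrt (real N) / h"
        using abs_sphereN_le[OF x, of i] h by (simp add: abs_divide divide_right_mono)
      then have "\<bar>of_int (round (x i / h))\<bar> \<le> sqrt (real N) / h + 1/2"
        using of_int_round_abs_le[of "x i / h"] by linarith
      then show ?thesis unfolding m_def by linarith
    qed
    then have "restrict (\<lambda>i. round (x i / h)) {..<N} \<in> PiE {..<N} (\<lambda>_. {-m..m})"
      by (force simp: abs_le_iff)
    moreover have "y = (\<lambda>i. if i < N then h * of_int (restrict (\<lambda>i. round (x i / h)) {..<N} i) else 0)"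
      by (auto simp: y grid_round_def)
    ultimately show "y \<in> G" unfolding G_def by blast
  qed
  have fin: "finite (PiE {..<N} (\<lambda>_. {-m..m}))" by (intro finite_PiE) auto
  then have "finite G" unfolding G_def by simp
  moreover have "card G \<le> nat (2*m+1) ^ N"
    using card_image_le[OF fin] by (simp add: G_def card_PiE)
  ultimately show "finite (grid_round N h ` sphereN N)" "card (grid_round N h ` sphereN N) \<le> nat (2*m+1) ^ N"
    using sub by (auto intro: finite_subset order.trans[OF card_mono])
qed

lemma sphere_net_subset: "N \<ge> 1 \<Longrightarrow> 0 \<le> \<alpha> \<Longrightarrow> sphere_net \<alpha> N \<subseteq> sphereN N"
  unfolding sphere_net_def using sphere_normalize_grid_round(1)[of N "real N powr (-\<alpha>/2)"]
  by (auto simp: ge_one_powr_ge_zero powr_minus_divide divide_le_eq)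

lemma sphere_net_covers:
  assumes N: "N \<ge> 1" and \<alpha>: "0 \<le> \<alpha>" and x: "x \<in> sphereN N"
  shows "\<exists>p\<in>sphere_net \<alpha> N. overlap N x p \<ge> 1 - real N powr (-\<alpha>)"
proof -
  let ?h = "real N powr (-\<alpha>/2)"
  have h: "0 < ?h" "?h \<le> 1"
    using N \<alpha> by (auto simp: ge_one_powr_ge_zero powr_minus_divide divide_le_eq)
  moreover have "?h^2 = real N powr (-\<alpha>)"
    by (simp add: power2_eq_square flip: powr_add)
  ultimately show ?thesis
    unfolding sphere_net_def using sphere_normalize_grid_round(2)[OF N h x] x by auto
qed

lemma card_sphere_net_le:
  assumes N: "N \<ge> 1" and \<alpha>: "0 \<le> \<alpha>"
  shows "finite (sphere_net \<alpha> N)"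
    "real (card (sphere_net \<alpha> N)) \<le> exp (real N * (ln 7 + (1 + \<alpha>)/2 * ln (real N)))"
proof -
  let ?h = "real N powr (-\<alpha>/2)" and ?R = "real N powr ((1 + \<alpha>)/2)"
  define m where "m = \<lceil>sqrt (real N) / ?h\<rceil> + 1"
  have h: "?h > 0" using N by simp
  have R: "sqrt (real N) / ?h = ?R" "1 \<le> ?R"
    using N \<alpha> by (simp_all add: powr_half_sqrt[symmetric] ge_one_powr_ge_zero add_divide_distrib flip: powr_diff)
  show "finite (sphere_net \<alpha> N)"
    unfolding sphere_net_def using card_grid_round_sphereN(1)[OF h, of N] by simp
  have "real (card (sphere_net \<alpha> N)) \<le> real (nat (2*m+1) ^ N)"
    unfolding sphere_net_def m_def
    using order.trans[OF card_image_le[OF card_grid_round_sphereN(1)[OF h, of N]]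
        card_grid_round_sphereN(2)[OF h, of N]]
    by (simp only: of_nat_le_iff)
  also have "\<dots> \<le> (7 * ?R) ^ N"
    unfolding of_nat_power using R by (intro power_mono) (auto simp: m_def, linarith)
  also have "\<dots> = exp (real N * ln (7 * ?R))"
    using N by (simp add: exp_of_nat_mult)
  also have "ln (7 * ?R) = ln 7 + (1 + \<alpha>)/2 * ln (real N)"
    using N by (simp add: ln_mult ln_powr)
  finally show "real (card (sphere_net \<alpha> N)) \<le> exp (real N * (ln 7 + (1 + \<alpha>)/2 * ln (real N)))" .
qed

section \<open>Chaining over the net\<close>

definition close_pairs :: "nat \<Rightarrow> real \<Rightarrow> ((nat \<Rightarrow> real) \<times> (nat \<Rightarrow> real)) set" where
  "close_pairs N r = {(x, y). x \<in> sphereN N \<and> y \<in> sphereN N \<and> overlap N x y \<ge> 1 - r}"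

lemma isotropic_field_deviation_sets:
  assumes "isotropic_field M N F" "p \<in> sphereN N"
  shows "{\<omega>\<in>space M. t \<le> \<bar>F \<omega> p - E\<bar>} \<in> sets M"
proof -
  have [measurable]: "(\<lambda>\<omega>. F \<omega> p) \<in> borel_measurable M"
    using assms by (auto simp: isotropic_field_def)
  show ?thesis by measurable
qed

lemma measure_UN_deviation_le:
  assumes iso: "isotropic_field M N F" and N: "N \<ge> 1" and P: "finite P" "P \<subseteq> sphereN N"
  shows "measure M (\<Union>p\<in>P. {\<omega>\<in>space M. t \<le> \<bar>F \<omega> p - E\<bar>})
      \<le> real (card P) * measure M {\<omega>\<in>space M. t \<le> \<bar>F \<omega> (northpole N) - E\<bar>}"
proof -
  have "measure M (\<Union>p\<in>P. {\<omega>\<in>space M. t \<le> \<bar>F \<omega> p - E\<bar>})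
      \<le> (\<Sum>p\<in>P. measure M {\<omega>\<in>space M. t \<le> \<bar>F \<omega> p - E\<bar>})"
    using P isotropic_field_deviation_sets[OF iso] by (intro measure_UNION_le) auto
  also have "\<dots> = (\<Sum>p\<in>P. measure M {\<omega>\<in>space M. t \<le> \<bar>F \<omega> (northpole N) - E\<bar>})"
    using P isotropic_field_event_measure_eq[OF iso N, of _ "\<lambda>y. t \<le> \<bar>y - E\<bar>"]
    by (intro sum.cong) auto
  finally show ?thesis by simp
qed

lemma (in prob_space) outer_prob_UN_deviation_le:
  assumes iso: "isotropic_field M N F" and N: "N \<ge> 1" and P: "finite P" "P \<subseteq> sphereN N"
    and A: "A \<inter> space M \<subseteq> (\<Union>p\<in>P. {\<omega>\<in>space M. t \<le> \<bar>F \<omega> p - E\<bar>}) \<union> B"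
  shows "outer_prob M A
      \<le> real (card P) * outer_prob M {\<omega>\<in>space M. t \<le> \<bar>F \<omega> (northpole N) - E\<bar>} + outer_prob M B"
proof -
  have "outer_prob M A \<le> measure M (\<Union>p\<in>P. {\<omega>\<in>space M. t \<le> \<bar>F \<omega> p - E\<bar>}) + outer_prob M B"
    using A P isotropic_field_deviation_sets[OF iso] by (intro outer_prob_Un_le sets.finite_UN) auto
  also have "measure M (\<Union>p\<in>P. {\<omega>\<in>space M. t \<le> \<bar>F \<omega> p - E\<bar>})
      \<le> real (card P) * outer_prob M {\<omega>\<in>space M. t \<le> \<bar>F \<omega> (northpole N) - E\<bar>}"
    using measure_UN_deviation_le[OF iso N P]
    by (simp add: outer_prob_eq_measure isotropic_field_deviation_sets[OF iso northpole_in_sphereN[OF N]])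
  finally show ?thesis by simp
qed

lemma (in prob_space) sup_deviation_le_net:
  assumes iso: "isotropic_field M N F" and N: "N \<ge> 1" and cs: "c > 0" "s > 0"
    and P: "finite P" "P \<subseteq> sphereN N" "\<And>x. x \<in> sphereN N \<Longrightarrow> \<exists>p\<in>P. overlap N x p \<ge> 1 - r"
  shows "outer_prob M {\<omega>\<in>space M. (SUP x\<in>sphereN N. ereal \<bar>F \<omega> x - E\<bar>) \<ge> ereal (c * s)}
      \<le> real (card P) * outer_prob M {\<omega>\<in>space M. \<bar>F \<omega> (northpole N) - E\<bar> \<ge> c/2 * s}
        + outer_prob M {\<omega>\<in>space M.
            (SUP (x, y)\<in>close_pairs N r. ereal \<bar>F \<omega> x - F \<omega> y\<bar>) \<ge> ereal (c/4 * s)}"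
proof (rule outer_prob_UN_deviation_le[OF iso N P(1,2)], safe)
  fix \<omega> assume \<omega>: "\<omega> \<in> space M" "ereal (c * s) \<le> (SUP x\<in>sphereN N. ereal \<bar>F \<omega> x - E\<bar>)"
    and far: "\<omega> \<notin> (\<Union>p\<in>P. {\<omega> \<in> space M. c/2 * s \<le> \<bar>F \<omega> p - E\<bar>})"
  have "ereal (3/4 * c * s) < (SUP x\<in>sphereN N. ereal \<bar>F \<omega> x - E\<bar>)"
    using cs \<omega>(2) by (auto intro: less_le_trans[of _ "ereal (c * s)"])
  then obtain x where x: "x \<in> sphereN N" "3/4 * c * s < \<bar>F \<omega> x - E\<bar>"
    by (auto simp: less_SUP_iff)
  obtain p where p: "p \<in> P" "overlap N x p \<ge> 1 - r" using P(3)[OF x(1)] by blast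
  have "\<bar>F \<omega> p - E\<bar> < c/2 * s" using far p(1) \<omega>(1) by auto
  then have "c/4 * s \<le> \<bar>F \<omega> x - F \<omega> p\<bar>"
    using x(2) abs_triangle_ineq[of "F \<omega> x - F \<omega> p" "F \<omega> p - E"] by simp
  also have "ereal \<bar>F \<omega> x - F \<omega> p\<bar> \<le> (SUP (x, y)\<in>close_pairs N r. ereal \<bar>F \<omega> x - F \<omega> y\<bar>)"
    using x p P(2) by (intro SUP_upper2[of "(x, p)"]) (auto simp: close_pairs_def)
  finally show "ereal (c/4 * s) \<le> (SUP (x, y)\<in>close_pairs N r. ereal \<bar>F \<omega> x - F \<omega> y\<bar>)"
    by simp
qed

lemma (in prob_space) sup_nonneg_le_net:
  assumes iso: "isotropic_field M N F" and N: "N \<ge> 1" and cs: "c > 0" "s > 0"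
    and E: "E \<le> c/4 * s" and nonneg: "AE \<omega> in M. \<forall>x\<in>sphereN N. F \<omega> x \<ge> 0"
    and P: "finite P" "P \<subseteq> sphereN N" "\<And>x. x \<in> sphereN N \<Longrightarrow> \<exists>p\<in>P. overlap N x p \<ge> 1 - r"
  shows "outer_prob M {\<omega>\<in>space M. (SUP x\<in>sphereN N. ereal (F \<omega> x)) \<ge> ereal (c * s)}
      \<le> real (card P) * outer_prob M {\<omega>\<in>space M. \<bar>F \<omega> (northpole N) - E\<bar> \<ge> c/4 * s}
        + outer_prob M {\<omega>\<in>space M.
            (SUP (x, y)\<in>close_pairs N r. ereal \<bar>(F \<omega> x)^2 - (F \<omega> y)^2\<bar>) \<ge> ereal (c^2/4 * s^2)}"
  using outer_prob_le_AE[OF nonneg]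
proof (rule order.trans)
  show "outer_prob M {\<omega> \<in> {\<omega>\<in>space M. (SUP x\<in>sphereN N. ereal (F \<omega> x)) \<ge> ereal (c * s)}.
          \<forall>x\<in>sphereN N. F \<omega> x \<ge> 0}
      \<le> real (card P) * outer_prob M {\<omega>\<in>space M. \<bar>F \<omega> (northpole N) - E\<bar> \<ge> c/4 * s}
        + outer_prob M {\<omega>\<in>space M.
            (SUP (x, y)\<in>close_pairs N r. ereal \<bar>(F \<omega> x)^2 - (F \<omega> y)^2\<bar>) \<ge> ereal (c^2/4 * s^2)}"
  proof (rule outer_prob_UN_deviation_le[OF iso N P(1,2)], safe)
    fix \<omega> assume \<omega>: "\<omega> \<in> space M" "ereal (c * s) \<le> (SUP x\<in>sphereN N. ereal (F \<omega> x))"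
      and pos: "\<forall>x\<in>sphereN N. F \<omega> x \<ge> 0"
      and far: "\<omega> \<notin> (\<Union>p\<in>P. {\<omega> \<in> space M. c/4 * s \<le> \<bar>F \<omega> p - E\<bar>})"
    have "ereal (3/4 * c * s) < (SUP x\<in>sphereN N. ereal (F \<omega> x))"
      using cs \<omega>(2) by (auto intro: less_le_trans[of _ "ereal (c * s)"])
    then obtain x where x: "x \<in> sphereN N" "3/4 * c * s < F \<omega> x"
      by (auto simp: less_SUP_iff)
    obtain p where p: "p \<in> P" "overlap N x p \<ge> 1 - r" using P(3)[OF x(1)] by blast
    \<comment> \<open>\<open>0 \<le> F \<omega> p < c s/2\<close> and \<open>F \<omega> x > 3 c s/4\<close>, and \<open>(3/4)\<^sup>2 - (1/2)\<^sup>2 \<ge> 1/4\<close>.\<close>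
    have "\<bar>F \<omega> p - E\<bar> < c/4 * s" using far p(1) \<omega>(1) by auto
    then have "F \<omega> p < c/2 * s" using E by linarith
    moreover have "0 \<le> F \<omega> p" using pos p(1) P(2) by auto
    ultimately have "(F \<omega> p)^2 \<le> (c/2 * s)^2" and "(3/4 * c * s)^2 \<le> (F \<omega> x)^2"
      using x(2) cs by (auto intro!: power_mono)
    then have "c^2/4 * s^2 \<le> \<bar>(F \<omega> x)^2 - (F \<omega> p)^2\<bar>"
      by (simp add: power_mult_distrib power_divide abs_if)
    also have "ereal \<bar>(F \<omega> x)^2 - (F \<omega> p)^2\<bar>
        \<le> (SUP (x, y)\<in>close_pairs N r. ereal \<bar>(F \<omega> x)^2 - (F \<omega> y)^2\<bar>)"
      using x p P(2) by (intro SUP_upper2[of "(x, p)"]) (auto simp: close_pairs_def)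
    finally show "ereal (c^2/4 * s^2) \<le> (SUP (x, y)\<in>close_pairs N r. ereal \<bar>(F \<omega> x)^2 - (F \<omega> y)^2\<bar>)"
      by simp
  qed
qed

section \<open>Exponential tail bounds\<close>

text \<open>Finitely many \<open>N\<close> can be absorbed into the constant, because probabilities are at most \<open>1\<close>.\<close>
lemma exp_tail_of_eventually:
  fixes Q g :: "nat \<Rightarrow> real"
  assumes Q1: "\<And>N. N \<ge> 1 \<Longrightarrow> Q N \<le> 1"
    and ev: "eventually (\<lambda>N. Q N \<le> K * exp (- f * g N)) sequentially"
  shows "\<exists>K'. \<forall>N\<ge>1. Q N \<le> K' * exp (- f * g N)"
proof -
  obtain N0 where N0: "\<And>N. N \<ge> N0 \<Longrightarrow> Q N \<le> K * exp (- f * g N)"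
    using ev by (auto simp: eventually_sequentially)
  define K' where "K' = \<bar>K\<bar> + (\<Sum>N<N0. exp (f * g N))"
  have "Q N \<le> K' * exp (- f * g N)" if N: "N \<ge> 1" for N
  proof (cases "N < N0")
    case True
    have "1 = exp (f * g N) * exp (- f * g N)" by (simp flip: exp_add)
    also have "\<dots> \<le> K' * exp (- f * g N)"
      unfolding K'_def using True
      by (intro mult_right_mono add_increasing[OF abs_ge_zero] member_le_sum) auto
    finally show ?thesis using Q1[OF N] by linarith
  next
    case False
    then have "Q N \<le> K * exp (- f * g N)" using N0 by simp
    also have "\<dots> \<le> K' * exp (- f * g N)"
      unfolding K'_def by (intro mult_right_mono add_increasing2[OF sum_nonneg] abs_ge_self) auto
    finally show ?thesis .
  qed
  then show ?thesis by blast
qed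

text \<open>A net of size \<open>exp (O (N log N))\<close> costs at most half of a rate \<open>exp (-c\<^sub>1 N^(1+2\<delta>))\<close>.\<close>
lemma net_union_exp_tail:
  fixes Q A B n :: "nat \<Rightarrow> real"
  assumes \<delta>: "\<delta> > 0" and c1: "c1 > 0"
    and Q1: "\<And>N. N \<ge> 1 \<Longrightarrow> Q N \<le> 1"
    and Q: "eventually (\<lambda>N. Q N \<le> n N * A N + B N) sequentially"
    and n: "\<And>N. N \<ge> 1 \<Longrightarrow> n N \<le> exp (real N * (a + b * ln (real N)))"
    and A: "\<And>N. N \<ge> 1 \<Longrightarrow> 0 \<le> A N" "\<And>N. N \<ge> 1 \<Longrightarrow> A N \<le> K1 * exp (- c1 * real N powr (1 + 2*\<delta>))"
    and B: "\<And>N. N \<ge> 1 \<Longrightarrow> 0 \<le> B N" "\<And>N. N \<ge> 1 \<Longrightarrow> B N \<le> K2 * exp (- c2 * real N powr (1 + 2*\<delta>))"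
  shows "\<exists>K. \<forall>N\<ge>1. Q N \<le> K * exp (- min (c1/2) c2 * real N powr (1 + 2*\<delta>))"
proof (rule exp_tail_of_eventually[OF Q1])
  define T where "T N = real N powr (1 + 2*\<delta>)" for N :: nat
  define f where "f = min (c1/2) c2"
  have K: "0 \<le> K1" "0 \<le> K2"
    using order.trans[OF A(1) A(2), of 1] order.trans[OF B(1) B(2), of 1]
    by (simp_all add: zero_le_mult_iff)
  have "eventually (\<lambda>N. real N * (a + b * ln (real N)) \<le> c1/2 * real N powr (1 + 2*\<delta>)) sequentially"
    using \<delta> c1 by real_asymp
  then show "eventually (\<lambda>N. Q N \<le> (K1 + K2) * exp (- f * T N)) sequentially"
    using Q eventually_ge_at_top[of 1]
  proof eventually_elim
    case (elim N)
    have T: "0 \<le> T N" by (simp add: T_def)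
    have "n N * A N \<le> exp (real N * (a + b * ln (real N))) * (K1 * exp (- c1 * T N))"
      using n A elim(3) by (intro mult_mono) (auto simp: T_def)
    also have "\<dots> = K1 * exp (real N * (a + b * ln (real N)) - c1 * T N)"
      by (simp add: exp_diff exp_minus field_simps)
    also have "\<dots> \<le> K1 * exp (- f * T N)"
    proof -
      have "f * T N \<le> c1/2 * T N" using T by (intro mult_right_mono) (auto simp: f_def)
      then have "real N * (a + b * ln (real N)) - c1 * T N \<le> - f * T N"
        using elim(1) unfolding T_def by linarith
      then show ?thesis using K(1) by (intro mult_left_mono) auto
    qed
    finally have "n N * A N \<le> K1 * exp (- f * T N)" .
    moreover have "B N \<le> K2 * exp (- f * T N)"
    proof -
      have "f * T N \<le> c2 * T N" using T by (intro mult_right_mono) (auto simp: f_def)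
      then have "K2 * exp (- c2 * T N) \<le> K2 * exp (- f * T N)"
        using K(2) by (intro mult_left_mono) auto
      then show ?thesis using B(2)[OF elim(3)] by (simp add: T_def)
    qed
    ultimately show ?case using elim(2) by (simp add: distrib_right)
  qed
qed

section \<open>Concentration of the supremum\<close>

lemma sup_deviation_exp_tail:
  fixes M :: "nat \<Rightarrow> 'w measure" and F :: "nat \<Rightarrow> 'w \<Rightarrow> (nat \<Rightarrow> real) \<Rightarrow> real" and E :: "nat \<Rightarrow> real"
  assumes prob: "\<And>N. N \<ge> 1 \<Longrightarrow> prob_space (M N)"
    and iso: "\<And>N. N \<ge> 1 \<Longrightarrow> isotropic_field (M N) N (F N)"
    and \<alpha>: "\<alpha> > 0"
    and pole: "\<forall>c>0. \<exists>c1>0. \<forall>\<delta>>0. \<exists>K. \<forall>N\<ge>1.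
      outer_prob (M N) {\<omega>\<in>space (M N). \<bar>F N \<omega> (northpole N) - E N\<bar> \<ge> c * real N powr (1/2 + \<delta>)}
        \<le> K * exp (- c1 * real N powr (1 + 2*\<delta>))"
    and osc: "\<forall>c>0. \<exists>c2>0. \<forall>\<delta>>0. \<exists>K. \<forall>N\<ge>1.
      outer_prob (M N) {\<omega>\<in>space (M N).
          (SUP (x, y)\<in>close_pairs N (real N powr (-\<alpha>)). ereal \<bar>F N \<omega> x - F N \<omega> y\<bar>)
            \<ge> ereal (c * real N powr (1/2 + \<delta>))}
        \<le> K * exp (- c2 * real N powr (1 + 2*\<delta>))"
  shows "\<forall>c>0. \<exists>f>0. \<forall>\<delta>>0. \<exists>K. \<forall>N\<ge>1.
      outer_prob (M N) {\<omega>\<in>space (M N).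
          (SUP x\<in>sphereN N. ereal \<bar>F N \<omega> x - E N\<bar>) \<ge> ereal (c * real N powr (1/2 + \<delta>))}
        \<le> K * exp (- f * real N powr (1 + 2*\<delta>))"
proof (intro allI impI)
  fix c :: real assume c: "c > 0"
  obtain c1 where c1: "c1 > 0" and tail1: "\<forall>\<delta>>0. \<exists>K. \<forall>N\<ge>1.
      outer_prob (M N) {\<omega>\<in>space (M N). \<bar>F N \<omega> (northpole N) - E N\<bar> \<ge> c/2 * real N powr (1/2 + \<delta>)}
        \<le> K * exp (- c1 * real N powr (1 + 2*\<delta>))"
    using pole[rule_format, of "c/2"] c by auto
  obtain c2 where c2: "c2 > 0" and tail2: "\<forall>\<delta>>0. \<exists>K. \<forall>N\<ge>1.
      outer_prob (M N) {\<omega>\<in>space (M N).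
          (SUP (x, y)\<in>close_pairs N (real N powr (-\<alpha>)). ereal \<bar>F N \<omega> x - F N \<omega> y\<bar>)
            \<ge> ereal (c/4 * real N powr (1/2 + \<delta>))}
        \<le> K * exp (- c2 * real N powr (1 + 2*\<delta>))"
    using osc[rule_format, of "c/4"] c by auto
  show "\<exists>f>0. \<forall>\<delta>>0. \<exists>K. \<forall>N\<ge>1.
      outer_prob (M N) {\<omega>\<in>space (M N).
          (SUP x\<in>sphereN N. ereal \<bar>F N \<omega> x - E N\<bar>) \<ge> ereal (c * real N powr (1/2 + \<delta>))}
        \<le> K * exp (- f * real N powr (1 + 2*\<delta>))"
  proof (rule exI[of _ "min (c1/2) c2"], intro conjI allI impI)
    show "0 < min (c1/2) c2" using c1 c2 by simp
    fix \<delta> :: real assume \<delta>: "\<delta> > 0"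
    obtain K1 K2 where K1: "\<forall>N\<ge>1.
      outer_prob (M N) {\<omega>\<in>space (M N). \<bar>F N \<omega> (northpole N) - E N\<bar> \<ge> c/2 * real N powr (1/2 + \<delta>)}
        \<le> K1 * exp (- c1 * real N powr (1 + 2*\<delta>))"
      and K2: "\<forall>N\<ge>1.
      outer_prob (M N) {\<omega>\<in>space (M N).
          (SUP (x, y)\<in>close_pairs N (real N powr (-\<alpha>)). ereal \<bar>F N \<omega> x - F N \<omega> y\<bar>)
            \<ge> ereal (c/4 * real N powr (1/2 + \<delta>))}
        \<le> K2 * exp (- c2 * real N powr (1 + 2*\<delta>))"
      using tail1 tail2 \<delta> by meson
    have "eventually (\<lambda>N. outer_prob (M N) {\<omega>\<in>space (M N).
          (SUP x\<in>sphereN N. ereal \<bar>F N \<omega> x - E N\<bar>) \<ge> ereal (c * real N powr (1/2 + \<delta>))}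
      \<le> real (card (sphere_net \<alpha> N)) *
          outer_prob (M N) {\<omega>\<in>space (M N). \<bar>F N \<omega> (northpole N) - E N\<bar> \<ge> c/2 * real N powr (1/2 + \<delta>)}
        + outer_prob (M N) {\<omega>\<in>space (M N).
          (SUP (x, y)\<in>close_pairs N (real N powr (-\<alpha>)). ereal \<bar>F N \<omega> x - F N \<omega> y\<bar>)
            \<ge> ereal (c/4 * real N powr (1/2 + \<delta>))}) sequentially"
      using eventually_ge_at_top[of 1]
    proof eventually_elim
      case (elim N)
      show ?case
        using \<alpha> c elim card_sphere_net_le(1) sphere_net_subset sphere_net_covers
        by (intro prob_space.sup_deviation_le_net[OF prob iso]) auto
    qed
    then show "\<exists>K. \<forall>N\<ge>1.
      outer_prob (M N) {\<omega>\<in>space (M N).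
          (SUP x\<in>sphereN N. ereal \<bar>F N \<omega> x - E N\<bar>) \<ge> ereal (c * real N powr (1/2 + \<delta>))}
        \<le> K * exp (- min (c1/2) c2 * real N powr (1 + 2*\<delta>))"
      using K1 K2 \<alpha> by (intro net_union_exp_tail[OF \<delta> c1])
        (auto intro: prob_space.outer_prob_le_1[OF prob] outer_prob_nonneg card_sphere_net_le(2))
  qed
qed

lemma sup_nonneg_exp_tail:
  fixes M :: "nat \<Rightarrow> 'w measure" and F :: "nat \<Rightarrow> 'w \<Rightarrow> (nat \<Rightarrow> real) \<Rightarrow> real" and E :: "nat \<Rightarrow> real"
  assumes prob: "\<And>N. N \<ge> 1 \<Longrightarrow> prob_space (M N)"
    and iso: "\<And>N. N \<ge> 1 \<Longrightarrow> isotropic_field (M N) N (F N)"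
    and nonneg: "\<forall>N\<ge>1. AE \<omega> in M N. \<forall>x\<in>sphereN N. F N \<omega> x \<ge> 0"
    and E: "\<forall>N\<ge>1. \<bar>E N\<bar> \<le> C * sqrt (real N)"
    and \<alpha>: "\<alpha> > 0"
    and pole: "\<forall>c>0. \<exists>c1>0. \<forall>\<delta>>0. \<exists>K. \<forall>N\<ge>1.
      outer_prob (M N) {\<omega>\<in>space (M N). \<bar>F N \<omega> (northpole N) - E N\<bar> \<ge> c * real N powr (1/2 + \<delta>)}
        \<le> K * exp (- c1 * real N powr (1 + 2*\<delta>))"
    and osc: "\<forall>c>0. \<exists>c2>0. \<forall>\<delta>>0. \<exists>K. \<forall>N\<ge>1.
      outer_prob (M N) {\<omega>\<in>space (M N).
          (SUP (x, y)\<in>close_pairs N (real N powr (-\<alpha>)). ereal \<bar>(F N \<omega> x)^2 - (F N \<omega> y)^2\<bar>)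
            \<ge> ereal (c * real N powr (1 + 2*\<delta>))}
        \<le> K * exp (- c2 * real N powr (1 + 2*\<delta>))"
  shows "\<forall>c>0. \<exists>f>0. \<forall>\<delta>>0. \<exists>K. \<forall>N\<ge>1.
      outer_prob (M N) {\<omega>\<in>space (M N).
          (SUP x\<in>sphereN N. ereal (F N \<omega> x)) \<ge> ereal (c * real N powr (1/2 + \<delta>))}
        \<le> K * exp (- f * real N powr (1 + 2*\<delta>))"
proof (intro allI impI)
  fix c :: real assume c: "c > 0"
  obtain c1 where c1: "c1 > 0" and tail1: "\<forall>\<delta>>0. \<exists>K. \<forall>N\<ge>1.
      outer_prob (M N) {\<omega>\<in>space (M N). \<bar>F N \<omega> (northpole N) - E N\<bar> \<ge> c/4 * real N powr (1/2 + \<delta>)}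
        \<le> K * exp (- c1 * real N powr (1 + 2*\<delta>))"
    using pole[rule_format, of "c/4"] c by auto
  obtain c2 where c2: "c2 > 0" and tail2: "\<forall>\<delta>>0. \<exists>K. \<forall>N\<ge>1.
      outer_prob (M N) {\<omega>\<in>space (M N).
          (SUP (x, y)\<in>close_pairs N (real N powr (-\<alpha>)). ereal \<bar>(F N \<omega> x)^2 - (F N \<omega> y)^2\<bar>)
            \<ge> ereal (c^2/4 * real N powr (1 + 2*\<delta>))}
        \<le> K * exp (- c2 * real N powr (1 + 2*\<delta>))"
    using osc[rule_format, of "c^2/4"] c by auto
  show "\<exists>f>0. \<forall>\<delta>>0. \<exists>K. \<forall>N\<ge>1.
      outer_prob (M N) {\<omega>\<in>space (M N).
          (SUP x\<in>sphereN N. ereal (F N \<omega> x)) \<ge> ereal (c * real N powr (1/2 + \<delta>))}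
        \<le> K * exp (- f * real N powr (1 + 2*\<delta>))"
  proof (rule exI[of _ "min (c1/2) c2"], intro conjI allI impI)
    show "0 < min (c1/2) c2" using c1 c2 by simp
    fix \<delta> :: real assume \<delta>: "\<delta> > 0"
    obtain K1 K2 where K1: "\<forall>N\<ge>1.
      outer_prob (M N) {\<omega>\<in>space (M N). \<bar>F N \<omega> (northpole N) - E N\<bar> \<ge> c/4 * real N powr (1/2 + \<delta>)}
        \<le> K1 * exp (- c1 * real N powr (1 + 2*\<delta>))"
      and K2: "\<forall>N\<ge>1.
      outer_prob (M N) {\<omega>\<in>space (M N).
          (SUP (x, y)\<in>close_pairs N (real N powr (-\<alpha>)). ereal \<bar>(F N \<omega> x)^2 - (F N \<omega> y)^2\<bar>)
            \<ge> ereal (c^2/4 * real N powr (1 + 2*\<delta>))}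
        \<le> K2 * exp (- c2 * real N powr (1 + 2*\<delta>))"
      using tail1 tail2 \<delta> by meson
    have "eventually (\<lambda>N. \<bar>C\<bar> * sqrt (real N) \<le> c/4 * real N powr (1/2 + \<delta>)) sequentially"
      using c \<delta> by real_asymp
    then have "eventually (\<lambda>N. outer_prob (M N) {\<omega>\<in>space (M N).
          (SUP x\<in>sphereN N. ereal (F N \<omega> x)) \<ge> ereal (c * real N powr (1/2 + \<delta>))}
      \<le> real (card (sphere_net \<alpha> N)) *
          outer_prob (M N) {\<omega>\<in>space (M N). \<bar>F N \<omega> (northpole N) - E N\<bar> \<ge> c/4 * real N powr (1/2 + \<delta>)}
        + outer_prob (M N) {\<omega>\<in>space (M N).
          (SUP (x, y)\<in>close_pairs N (real N powr (-\<alpha>)). ereal \<bar>(F N \<omega> x)^2 - (F N \<omega> y)^2\<bar>)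
            \<ge> ereal (c^2/4 * real N powr (1 + 2*\<delta>))}) sequentially"
      using eventually_ge_at_top[of 1]
    proof eventually_elim
      case (elim N)
      have "E N \<le> \<bar>C\<bar> * sqrt (real N)"
        using E[rule_format, OF elim(2)] mult_right_mono[OF abs_ge_self[of C] real_sqrt_ge_zero[of "real N"]]
        by linarith
      then have E_le: "E N \<le> c/4 * real N powr (1/2 + \<delta>)" using elim(1) by linarith
      have sq: "(real N powr (1/2 + \<delta>))^2 = real N powr (1 + 2*\<delta>)"
        by (simp add: power2_eq_square add_ac flip: powr_add)
      have s: "0 < real N powr (1/2 + \<delta>)" using elim(2) by simp
      have N: "N \<ge> 1" and \<alpha>0: "0 \<le> \<alpha>" using elim(2) \<alpha> by auto
      show ?case
        using prob_space.sup_nonneg_le_net[OF prob[OF N] iso[OF N] N c s E_le nonneg[rule_format, OF N]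
            card_sphere_net_le(1)[OF N \<alpha>0] sphere_net_subset[OF N \<alpha>0] sphere_net_covers[OF N \<alpha>0]]
        unfolding sq .
    qed
    then show "\<exists>K. \<forall>N\<ge>1.
      outer_prob (M N) {\<omega>\<in>space (M N).
          (SUP x\<in>sphereN N. ereal (F N \<omega> x)) \<ge> ereal (c * real N powr (1/2 + \<delta>))}
        \<le> K * exp (- min (c1/2) c2 * real N powr (1 + 2*\<delta>))"
      using K1 K2 \<alpha> by (intro net_union_exp_tail[OF \<delta> c1])
        (auto intro: prob_space.outer_prob_le_1[OF prob] outer_prob_nonneg card_sphere_net_le(2))
  qed
qed

theorem mainTheorem12:
  fixes M :: "nat \<Rightarrow> 'w measure"
    and F :: "nat \<Rightarrow> 'w \<Rightarrow> (nat \<Rightarrow> real) \<Rightarrow> real"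
  assumes prob: "\<And>N. N \<ge> 1 \<Longrightarrow> prob_space (M N)"
    and iso: "\<And>N. N \<ge> 1 \<Longrightarrow> isotropic_field (M N) N (F N)"
    and cont: "\<And>N. N \<ge> 1 \<Longrightarrow> AE \<omega> in M N. continuous_on (sphereN N) (F N \<omega>)"
    and integ: "\<And>N. N \<ge> 1 \<Longrightarrow> integrable (M N) (\<lambda>\<omega>. F N \<omega> (northpole N))"
  shows
   "((\<forall>c>0. \<exists>c1>0. \<forall>\<delta>>0. \<exists>K. \<forall>N\<ge>1.
        outer_prob (M N) {\<omega>\<in>space (M N).
           \<bar>F N \<omega> (northpole N) - (\<integral>\<omega>'. F N \<omega>' (northpole N) \<partial>M N)\<bar>
             \<ge> c * real N powr (1/2 + \<delta>)}
        \<le> K * exp (- c1 * real N powr (1 + 2*\<delta>)))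
     \<and> (\<exists>\<alpha>>0. \<forall>c>0. \<exists>c2>0. \<forall>\<delta>>0. \<exists>K. \<forall>N\<ge>1.
        outer_prob (M N) {\<omega>\<in>space (M N).
           (SUP (x,y)\<in>{(x,y). x \<in> sphereN N \<and> y \<in> sphereN N \<and>
                             overlap N x y \<ge> 1 - real N powr (-\<alpha>)}.
               ereal \<bar>F N \<omega> x - F N \<omega> y\<bar>)
             \<ge> ereal (c * real N powr (1/2 + \<delta>))}
        \<le> K * exp (- c2 * real N powr (1 + 2*\<delta>)))
     \<longrightarrow> (\<forall>c>0. \<exists>f>0. \<forall>\<delta>>0. \<exists>K. \<forall>N\<ge>1.
        outer_prob (M N) {\<omega>\<in>space (M N).
           (SUP x\<in>sphereN N.
               ereal \<bar>F N \<omega> x - (\<integral>\<omega>'. F N \<omega>' (northpole N) \<partial>M N)\<bar>)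
             \<ge> ereal (c * real N powr (1/2 + \<delta>))}
        \<le> K * exp (- f * real N powr (1 + 2*\<delta>))))
  \<and>
   ((\<forall>N\<ge>1. AE \<omega> in M N. \<forall>x\<in>sphereN N. F N \<omega> x \<ge> 0)
     \<and> (\<exists>C. \<forall>N\<ge>1. \<bar>\<integral>\<omega>. F N \<omega> (northpole N) \<partial>M N\<bar> \<le> C * sqrt (real N))
     \<and> (\<forall>c>0. \<exists>c1>0. \<forall>\<delta>>0. \<exists>K. \<forall>N\<ge>1.
        outer_prob (M N) {\<omega>\<in>space (M N).
           \<bar>F N \<omega> (northpole N) - (\<integral>\<omega>'. F N \<omega>' (northpole N) \<partial>M N)\<bar>
             \<ge> c * real N powr (1/2 + \<delta>)}
        \<le> K * exp (- c1 * real N powr (1 + 2*\<delta>)))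
     \<and> (\<exists>\<alpha>>0. \<forall>c>0. \<exists>c2>0. \<forall>\<delta>>0. \<exists>K. \<forall>N\<ge>1.
        outer_prob (M N) {\<omega>\<in>space (M N).
           (SUP (x,y)\<in>{(x,y). x \<in> sphereN N \<and> y \<in> sphereN N \<and>
                             overlap N x y \<ge> 1 - real N powr (-\<alpha>)}.
               ereal \<bar>(F N \<omega> x)^2 - (F N \<omega> y)^2\<bar>)
             \<ge> ereal (c * real N powr (1 + 2*\<delta>))}
        \<le> K * exp (- c2 * real N powr (1 + 2*\<delta>)))
     \<longrightarrow> (\<forall>c>0. \<exists>f>0. \<forall>\<delta>>0. \<exists>K. \<forall>N\<ge>1.
        outer_prob (M N) {\<omega>\<in>space (M N).
           (SUP x\<in>sphereN N. ereal (F N \<omega> x)) \<ge> ereal (c * real N powr (1/2 + \<delta>))}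
        \<le> K * exp (- f * real N powr (1 + 2*\<delta>))))"
  by (intro conjI impI; elim conjE exE)
    ((rule sup_deviation_exp_tail[OF prob iso, unfolded close_pairs_def]; assumption),
     (rule sup_nonneg_exp_tail[OF prob iso, unfolded close_pairs_def]; assumption))

end
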